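(* Let $G=(V,E)$ be a connected network with $N\ge 2$ nodes, and let $A=(\alpha_1,\dots,\alpha_{N-1})$ be its $\alpha$-array. Then $$\Big(\tfrac{N(N-1)}{2},0,\dots,0\Big)\succcurlyeq A\succcurlyeq C:=(N-1,N-2,\dots,1)$$ in the extended majorization order. Explicitly, $\sum_{j=1}^{N-1}\alpha_j=\sum_{j=1}^{N-1}(N-j)=\frac{N(N-1)}{2}$, and for every $i=1,\dots,N-2$, $$\frac{N(N-1)}{2}\ \ge\ \sum_{j=1}^{i}\alpha_j\ \ge\ \sum_{j=1}^{i}(N-j).$$
   Context: A network is a finite, simple, undirected, unweighted graph $G=(V,E)$, assumed connected, with $N=\#V$ nodes. The distance $d(u,v)$ between two nodes is the number of edges on a shortest path between them. For $j=1,\dots,N-1$, $\alpha_j$ denotes the number of unordered pairs $\{u,v\}$ of distinct nodes with $d(u,v)=j$; the array $A=(\alpha_1,\dots,\alpha_{N-1})$ is the $\alpha$-array of $G$. Extended majorization: for two sequences $X=(x_1,\dots,x_{N-1})$, $Y=(y_1,\dots,y_{N-1})$ of non-negative numbers (not necessarily ordered), $X\succcurlyeq Y$ means $\sum_{j=1}^{i}x_j\ge\sum_{j=1}^{i}y_j$ for all $i=1,\dots,N-2$ and $\sum_{j=1}^{N-1}x_j=\sum_{j=1}^{N-1}y_j$. Note that $C=(N-1,\dots,1)$ is the $\alpha$-array of the path (chain) on $N$ nodes. *)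

theory Defs
  imports Complex_Main
begin

definition simple_graph :: "'a set \<Rightarrow> 'a set set \<Rightarrow> bool" where
  "simple_graph V E \<longleftrightarrow> finite V \<and> (\<forall>e\<in>E. e \<subseteq> V \<and> card e = 2)"

definition is_walk :: "'a set \<Rightarrow> 'a set set \<Rightarrow> 'a list \<Rightarrow> bool" where
  "is_walk V E xs \<longleftrightarrow> xs \<noteq> [] \<and> set xs \<subseteq> V \<and>
     (\<forall>i. Suc i < length xs \<longrightarrow> {xs ! i, xs ! Suc i} \<in> E)"

definition connected_graph :: "'a set \<Rightarrow> 'a set set \<Rightarrow> bool" where
  "connected_graph V E \<longleftrightarrow>
     (\<forall>u\<in>V. \<forall>v\<in>V. \<exists>xs. is_walk V E xs \<and> hd xs = u \<and> last xs = v)"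

definition gdist :: "'a set \<Rightarrow> 'a set set \<Rightarrow> 'a \<Rightarrow> 'a \<Rightarrow> nat" where
  "gdist V E u v = (LEAST n. \<exists>xs. is_walk V E xs \<and> hd xs = u \<and> last xs = v \<and> length xs = Suc n)"

definition alpha :: "'a set \<Rightarrow> 'a set set \<Rightarrow> nat \<Rightarrow> nat" where
  "alpha V E j = card {{u, v} | u v. u \<in> V \<and> v \<in> V \<and> u \<noteq> v \<and> gdist V E u v = j}"

definition ext_majorizes :: "nat \<Rightarrow> (nat \<Rightarrow> real) \<Rightarrow> (nat \<Rightarrow> real) \<Rightarrow> bool" where
  "ext_majorizes N x y \<longleftrightarrow>
     (\<forall>i\<in>{1..N-2}. (\<Sum>j=1..i. x j) \<ge> (\<Sum>j=1..i. y j)) \<and>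
     (\<Sum>j=1..N-1. x j) = (\<Sum>j=1..N-1. y j)"

end

theory Submission
  imports Defs
begin

text \<open>The i-th partial sum of the alpha-array counts the pairs at distance at most i, so it is
  bounded by the number N(N-1)/2 of all pairs, and for i = N - 1 it equals that number because a
  connected graph has diameter less than N. The partial sums of the chain are N(N-1)/2 minus the
  number (N-i)(N-i-1)/2 of pairs of a path at distance greater than i, so the lower bound says
  that no connected graph has more pairs at distance greater than i than the path. This is shown
  by induction on N: deleting a vertex w at maximal distance from some vertex keeps the graph
  connected and does not shorten any distance, and at most N - 1 - i vertices are at distance
  greater than i from w, because a shortest walk to any of them already visits i vertices at
  distances 1, ..., i.\<close>

lemma is_walk_Cons:
  "is_walk V E (x # zs) \<longleftrightarrow> x \<in> V \<and> (zs = [] \<or> {x, hd zs} \<in> E \<and> is_walk V E zs)"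
proof (cases zs)
  case (Cons y ys)
  have "(\<forall>i. Suc i < length (x # zs) \<longrightarrow> {(x # zs) ! i, (x # zs) ! Suc i} \<in> E) \<longleftrightarrow>
        {x, y} \<in> E \<and> (\<forall>i. Suc i < length zs \<longrightarrow> {zs ! i, zs ! Suc i} \<in> E)"
    using Cons by (auto simp: less_Suc_eq_0_disj)
  then show ?thesis
    using Cons by (auto simp: is_walk_def)
qed (simp add: is_walk_def)

lemma is_walk_append:
  assumes "is_walk V E xs" "is_walk V E ys" "last xs = hd ys"
  shows "is_walk V E (butlast xs @ ys)"
  using assms
proof (induction xs)
  case (Cons a xs)
  show ?case
  proof (cases xs)
    case (Cons b xs')
    then have "a \<in> V" "{a, b} \<in> E" "is_walk V E (butlast xs @ ys)"
      using Cons.prems Cons.IH by (auto simp: is_walk_Cons)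
    moreover have "hd (butlast xs @ ys) = b"
      using Cons.prems \<open>xs = b # xs'\<close> by (cases xs') auto
    moreover have "butlast (a # xs) @ ys = a # (butlast xs @ ys)"
      using \<open>xs = b # xs'\<close> by simp
    ultimately show ?thesis
      by (simp only: is_walk_Cons) simp
  qed (use Cons.prems in simp)
qed (simp add: is_walk_def)

lemma hd_butlast_append: "xs \<noteq> [] \<Longrightarrow> last xs = hd ys \<Longrightarrow> hd (butlast xs @ ys) = hd xs"
  by (induction xs) auto

lemma is_walk_rev: "is_walk V E xs \<Longrightarrow> is_walk V E (rev xs)"
  unfolding is_walk_def
proof (intro conjI allI impI)
  fix i
  assume xs: "xs \<noteq> [] \<and> set xs \<subseteq> V \<and> (\<forall>i. Suc i < length xs \<longrightarrow> {xs ! i, xs ! Suc i} \<in> E)"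
    and i: "Suc i < length (rev xs)"
  define j where "j = length xs - Suc (Suc i)"
  have "{xs ! j, xs ! Suc j} \<in> E"
    using xs i by (simp add: j_def)
  moreover have "rev xs ! i = xs ! Suc j" "rev xs ! Suc i = xs ! j"
    using i by (auto simp: rev_nth j_def Suc_diff_Suc)
  ultimately show "{rev xs ! i, rev xs ! Suc i} \<in> E"
    by (simp add: insert_commute)
qed auto

lemma is_walk_take: "is_walk V E xs \<Longrightarrow> 0 < k \<Longrightarrow> is_walk V E (take k xs)"
  unfolding is_walk_def by (auto dest: in_set_takeD)

lemma is_walk_drop: "is_walk V E xs \<Longrightarrow> k < length xs \<Longrightarrow> is_walk V E (drop k xs)"
  unfolding is_walk_def by (auto dest: in_set_dropD)

lemma is_walk_mono: "is_walk V' E xs \<Longrightarrow> V' \<subseteq> V \<Longrightarrow> is_walk V E xs"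
  unfolding is_walk_def by auto

lemma connected_graphI_walks_from:
  assumes r: "r \<in> V" and walks: "\<And>u. u \<in> V \<Longrightarrow> \<exists>xs. is_walk V E xs \<and> hd xs = r \<and> last xs = u"
  shows "connected_graph V E"
  unfolding connected_graph_def
proof (intro ballI)
  fix u v
  assume "u \<in> V" "v \<in> V"
  then obtain xs ys where xs: "is_walk V E xs" "hd xs = r" "last xs = u"
    and ys: "is_walk V E ys" "hd ys = r" "last ys = v"
    using walks by blast
  have ne: "xs \<noteq> []" "ys \<noteq> []"
    using xs ys by (auto simp: is_walk_def)
  have "is_walk V E (butlast (rev xs) @ ys)"
    using is_walk_append[OF is_walk_rev[OF xs(1)] ys(1)] xs ys ne by (simp add: last_rev)
  moreover have "hd (butlast (rev xs) @ ys) = u"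
    using hd_butlast_append[of "rev xs" ys] xs ys ne by (simp add: hd_rev last_rev)
  moreover have "last (butlast (rev xs) @ ys) = v"
    using ys ne by simp
  ultimately show "\<exists>zs. is_walk V E zs \<and> hd zs = u \<and> last zs = v"
    by blast
qed

lemma gdist_less_length:
  assumes "is_walk V E xs" "hd xs = u" "last xs = v"
  shows "gdist V E u v < length xs"
proof -
  have pos: "0 < length xs"
    using assms by (simp add: is_walk_def)
  then have "length xs = Suc (length xs - 1)"
    by simp
  then have "gdist V E u v \<le> length xs - 1"
    unfolding gdist_def using assms by (intro Least_le) blast
  then show ?thesis
    using pos by linarith
qed

lemma shortest_walk_exists:
  assumes "connected_graph V E" "u \<in> V" "v \<in> V"
  obtains xs where "is_walk V E xs" "hd xs = u" "last xs = v" "length xs = Suc (gdist V E u v)"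
proof -
  obtain xs where "is_walk V E xs" "hd xs = u" "last xs = v"
    using assms unfolding connected_graph_def by blast
  then have "\<exists>n xs. is_walk V E xs \<and> hd xs = u \<and> last xs = v \<and> length xs = Suc n"
    by (metis Suc_pred is_walk_def length_greater_0_conv)
  from LeastI_ex[OF this] show ?thesis
    using that unfolding gdist_def by blast
qed

lemma gdist_self: "u \<in> V \<Longrightarrow> gdist V E u u = 0"
  using gdist_less_length[of V E "[u]" u u] by (simp add: is_walk_def)

lemma gdist_eq_0:
  assumes "connected_graph V E" "u \<in> V" "v \<in> V" "gdist V E u v = 0"
  shows "u = v"
proof -
  obtain xs where "is_walk V E xs" "hd xs = u" "last xs = v" "length xs = Suc 0"
    using shortest_walk_exists[OF assms(1-3)] assms(4) by metis
  then show ?thesis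
    by (cases xs) auto
qed

lemma gdist_commute:
  assumes "connected_graph V E" "u \<in> V" "v \<in> V"
  shows "gdist V E u v = gdist V E v u"
proof -
  have "gdist V E a b \<le> gdist V E b a" if ab: "a \<in> V" "b \<in> V" for a b
  proof -
    obtain xs where xs: "is_walk V E xs" "hd xs = b" "last xs = a" "length xs = Suc (gdist V E b a)"
      using shortest_walk_exists[OF assms(1) ab(2,1)] .
    have "gdist V E a b < length (rev xs)"
      using gdist_less_length[OF is_walk_rev[OF xs(1)]] xs by (auto simp: hd_rev last_rev)
    then show ?thesis
      using xs by simp
  qed
  then show ?thesis
    using assms by (meson antisym)
qed

lemma gdist_triangle:
  assumes "connected_graph V E" "u \<in> V" "v \<in> V" "w \<in> V"
  shows "gdist V E u w \<le> gdist V E u v + gdist V E v w"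
proof -
  obtain xs where xs: "is_walk V E xs" "hd xs = u" "last xs = v" "length xs = Suc (gdist V E u v)"
    using shortest_walk_exists[OF assms(1-3)] .
  obtain ys where ys: "is_walk V E ys" "hd ys = v" "last ys = w" "length ys = Suc (gdist V E v w)"
    using shortest_walk_exists[OF assms(1,3,4)] .
  have "hd (butlast xs @ ys) = u"
    using hd_butlast_append[of xs ys] xs ys by (simp add: is_walk_def)
  moreover have "last (butlast xs @ ys) = w"
    using ys by (cases ys) auto
  ultimately have "gdist V E u w < length (butlast xs @ ys)"
    using gdist_less_length[OF is_walk_append[OF xs(1) ys(1)]] xs ys by simp
  then show ?thesis
    using xs ys by simp
qed

text \<open>The prefix and the suffix at position t are walks with t and d - t edges, so by the triangle
  inequality both bounds are tight.\<close>

lemma gdist_shortest_walk_nth: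
  assumes c: "connected_graph V E" and uv: "u \<in> V" "v \<in> V"
    and xs: "is_walk V E xs" "hd xs = u" "last xs = v" "length xs = Suc (gdist V E u v)"
    and t: "t \<le> gdist V E u v"
  shows "xs ! t \<in> V" "gdist V E u (xs ! t) = t"
proof -
  have tl: "t < length xs"
    using xs t by simp
  show inV: "xs ! t \<in> V"
    using xs(1) tl by (auto simp: is_walk_def)
  have "gdist V E u (xs ! t) < length (take (Suc t) xs)"
  proof (rule gdist_less_length)
    show "is_walk V E (take (Suc t) xs)"
      using is_walk_take[OF xs(1)] by simp
    show "hd (take (Suc t) xs) = u"
      using xs(2) tl by (cases xs) auto
    show "last (take (Suc t) xs) = xs ! t"
      using tl by (simp add: take_Suc_conv_app_nth)
  qed
  then have before: "gdist V E u (xs ! t) \<le> t"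
    by simp
  have after: "gdist V E (xs ! t) v < length (drop t xs)"
    by (rule gdist_less_length[OF is_walk_drop[OF xs(1) tl]])
      (use tl xs in \<open>auto simp: hd_drop_conv_nth\<close>)
  have "gdist V E u v \<le> gdist V E u (xs ! t) + gdist V E (xs ! t) v"
    by (rule gdist_triangle[OF c uv(1) inV uv(2)])
  then show "gdist V E u (xs ! t) = t"
    using before after xs(4) by simp
qed

lemma inj_on_shortest_walk_nth:
  assumes "connected_graph V E" "u \<in> V" "v \<in> V"
    and "is_walk V E xs" "hd xs = u" "last xs = v" "length xs = Suc (gdist V E u v)"
  shows "inj_on ((!) xs) {..gdist V E u v}"
  using gdist_shortest_walk_nth(2)[OF assms] by (metis atMost_iff inj_onI)

lemma gdist_le_gdist_subset:
  assumes "connected_graph V' E" "V' \<subseteq> V" "u \<in> V'" "v \<in> V'"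
  shows "gdist V E u v \<le> gdist V' E u v"
proof -
  obtain xs where "is_walk V' E xs" "hd xs = u" "last xs = v" "length xs = Suc (gdist V' E u v)"
    using shortest_walk_exists[OF assms(1,3,4)] .
  then show ?thesis
    using gdist_less_length[OF is_walk_mono[OF _ assms(2)]] by fastforce
qed

lemma card_far_from_le:
  assumes c: "connected_graph V E" and f: "finite V" and w: "w \<in> V"
  shows "card {v \<in> V. i < gdist V E w v} \<le> card V - Suc i"
proof (cases "{v \<in> V. i < gdist V E w v} = {}")
  case False
  let ?F = "{v \<in> V. i < gdist V E w v}"
  obtain v where v: "v \<in> V" "i < gdist V E w v"
    using False by auto
  obtain xs where xs: "is_walk V E xs" "hd xs = w" "last xs = v" "length xs = Suc (gdist V E w v)"
    using shortest_walk_exists[OF c w v(1)] .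
  note nth = gdist_shortest_walk_nth[OF c w v(1) xs]
  let ?P = "(!) xs ` {1..i}"
  have "inj_on ((!) xs) {1..i}"
    using inj_on_subset[OF inj_on_shortest_walk_nth[OF c w v(1) xs]] v(2) by auto
  then have "card ?P = i"
    by (simp add: card_image)
  moreover have "?P \<inter> ?F = {}"
    using nth v(2) by fastforce
  then have "card (?P \<union> ?F) = card ?P + card ?F"
    using f by (intro card_Un_disjoint) auto
  moreover have "?P \<union> ?F \<subseteq> V - {w}"
  proof -
    have "\<forall>t\<in>{1..i}. xs ! t \<in> V - {w}"
      using nth v(2) gdist_self[OF w, of E] by fastforce
    then have "?P \<subseteq> V - {w}"
      by (simp only: image_subset_iff)
    moreover have "?F \<subseteq> V - {w}"
      using gdist_self[OF w, of E] by auto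
    ultimately show ?thesis
      by (rule Un_least)
  qed
  then have "card (?P \<union> ?F) \<le> card V - 1"
    using f w by (metis card_Diff_singleton card_mono finite_Diff)
  ultimately show ?thesis
    by linarith
next
  case True
  then show ?thesis
    by (simp only: card.empty zero_le)
qed

text \<open>Shortest walks from r to the other vertices do not pass through a vertex farthest from r.\<close>

lemma connected_graph_Diff_farthest:
  assumes c: "connected_graph V E" and r: "r \<in> V" "r \<noteq> w"
    and farthest: "\<And>x. x \<in> V \<Longrightarrow> gdist V E r x \<le> gdist V E r w"
  shows "connected_graph (V - {w}) E"
proof (rule connected_graphI_walks_from)
  show "r \<in> V - {w}"
    using r by simp
  fix u
  assume u: "u \<in> V - {w}"
  obtain xs where xs: "is_walk V E xs" "hd xs = r" "last xs = u" "length xs = Suc (gdist V E r u)"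
    using shortest_walk_exists[OF c r(1)] u by blast
  note nth = gdist_shortest_walk_nth[OF c r(1) _ xs]
  have avoid: "xs ! t \<noteq> w" if "t < length xs" for t
  proof (cases "t = gdist V E r u")
    case True
    then show ?thesis
      using xs u by (simp add: last_conv_nth is_walk_def)
  next
    case False
    then show ?thesis
      using nth[of t] that xs(4) farthest[of u] u by force
  qed
  have "set xs \<subseteq> V - {w}"
  proof
    fix y
    assume "y \<in> set xs"
    then obtain t where "t < length xs" "y = xs ! t"
      by (auto simp: in_set_conv_nth)
    then show "y \<in> V - {w}"
      using avoid xs(1) by (auto simp: is_walk_def)
  qed
  then show "\<exists>xs. is_walk (V - {w}) E xs \<and> hd xs = r \<and> last xs = u"
    using xs by (auto simp: is_walk_def)
qed

definition dist_pairs :: "'a set \<Rightarrow> 'a set set \<Rightarrow> nat set \<Rightarrow> 'a set set" where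
  "dist_pairs V E A = {{u, v} | u v. u \<in> V \<and> v \<in> V \<and> u \<noteq> v \<and> gdist V E u v \<in> A}"

lemma alpha_eq_card_dist_pairs: "alpha V E j = card (dist_pairs V E {j})"
  unfolding alpha_def dist_pairs_def by simp

lemma finite_dist_pairs: "finite V \<Longrightarrow> finite (dist_pairs V E A)"
  unfolding dist_pairs_def by (rule finite_subset[of _ "Pow V"]) auto

lemma dist_pairs_empty [simp]: "dist_pairs V E {} = {}"
  unfolding dist_pairs_def by simp

lemma dist_pairs_UN: "dist_pairs V E (\<Union>j\<in>J. A j) = (\<Union>j\<in>J. dist_pairs V E (A j))"
  unfolding dist_pairs_def by blast

lemma dist_pairs_Int:
  assumes "connected_graph V E"
  shows "dist_pairs V E A \<inter> dist_pairs V E B = dist_pairs V E (A \<inter> B)"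
proof -
  have "gdist V E u v \<in> A"
    if "{u, v} \<in> dist_pairs V E A" "u \<in> V" "v \<in> V" for u v A
    using that gdist_commute[OF assms] unfolding dist_pairs_def by (auto simp: doubleton_eq_iff)
  then show ?thesis
    unfolding dist_pairs_def by blast
qed

lemma card_dist_pairs_UNIV:
  assumes "finite V"
  shows "card (dist_pairs V E UNIV) = card V choose 2"
proof -
  have "dist_pairs V E UNIV = {B. B \<subseteq> V \<and> card B = 2}"
    unfolding dist_pairs_def by (auto simp: card_2_iff)
  then show ?thesis
    using assms by (simp add: n_subsets)
qed

lemma dist_pairs_pos:
  assumes "connected_graph V E"
  shows "dist_pairs V E {0<..} = dist_pairs V E UNIV"
  using gdist_eq_0[OF assms] unfolding dist_pairs_def by fastforce

lemma card_dist_pairs_atLeastAtMost: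
  assumes c: "connected_graph V E" and f: "finite V"
  shows "card (dist_pairs V E {1..i}) = (\<Sum>j=1..i. alpha V E j)"
proof -
  have "card (\<Union>j\<in>{1..i}. dist_pairs V E {j}) = (\<Sum>j=1..i. card (dist_pairs V E {j}))"
    using finite_dist_pairs[OF f] dist_pairs_Int[OF c] by (intro card_UN_disjoint) auto
  then show ?thesis
    using dist_pairs_UN[of V E "\<lambda>j. {j}" "{1..i}"] by (simp add: alpha_eq_card_dist_pairs)
qed

lemma sum_alpha_add_card_far_pairs:
  assumes c: "connected_graph V E" and f: "finite V"
  shows "(\<Sum>j=1..i. alpha V E j) + card (dist_pairs V E {i<..}) = card V choose 2"
proof -
  have "{0<..} = {1..i} \<union> {i<..}"
    by auto
  then have "dist_pairs V E UNIV = dist_pairs V E {1..i} \<union> dist_pairs V E {i<..}"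
    using dist_pairs_pos[OF c] dist_pairs_UN[of V E id "{{1..i}, {i<..}}"] by simp
  moreover have "dist_pairs V E {1..i} \<inter> dist_pairs V E {i<..} = {}"
    using dist_pairs_Int[OF c, of "{1..i}" "{i<..}"] by (simp add: dist_pairs_def)
  ultimately show ?thesis
    using card_dist_pairs_UNIV[OF f] card_dist_pairs_atLeastAtMost[OF c f, of i]
      finite_dist_pairs[OF f] by (metis card_Un_disjoint)
qed

lemma dist_pairs_far_subset_Diff:
  assumes c: "connected_graph V E" and c': "connected_graph (V - {w}) E"
  shows "dist_pairs V E {i<..} \<subseteq>
    dist_pairs (V - {w}) E {i<..} \<union> (\<lambda>v. {w, v}) ` {v \<in> V. i < gdist V E w v}"
proof
  fix p
  assume "p \<in> dist_pairs V E {i<..}"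
  then obtain u v where p: "p = {u, v}" "u \<in> V" "v \<in> V" "u \<noteq> v" "i < gdist V E u v"
    unfolding dist_pairs_def by blast
  consider "u = w" | "v = w" | "u \<noteq> w" "v \<noteq> w"
    by blast
  then show "p \<in> dist_pairs (V - {w}) E {i<..} \<union> (\<lambda>v. {w, v}) ` {v \<in> V. i < gdist V E w v}"
  proof cases
    case 1
    then show ?thesis
      using p by auto
  next
    case 2
    then have "p = {w, u}" "i < gdist V E w u"
      using p gdist_commute[OF c p(2,3)] by auto
    then show ?thesis
      using p(2) by auto
  next
    case 3
    then have "gdist V E u v \<le> gdist (V - {w}) E u v"
      using p by (intro gdist_le_gdist_subset[OF c']) auto
    then show ?thesis
      using p 3 unfolding dist_pairs_def by fastforce
  qed
qed

lemma choose_two_Suc: "Suc n choose 2 = n + (n choose 2)"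
  by (simp add: numeral_2_eq_2)

lemma card_far_dist_pairs_le:
  assumes "finite V" "connected_graph V E"
  shows "card (dist_pairs V E {i<..}) \<le> (card V - i) choose 2"
  using assms
proof (induction "card V" arbitrary: V rule: less_induct)
  case less
  note f = less.prems(1) and c = less.prems(2)
  show ?case
  proof (cases "card V \<le> 1")
    case True
    then have "dist_pairs V E {i<..} = {}"
      using f unfolding dist_pairs_def by (auto simp: card_le_Suc0_iff_eq)
    then show ?thesis
      by simp
  next
    case False
    then obtain r x where r: "r \<in> V" and x: "x \<in> V" "x \<noteq> r"
      using f by (auto simp: card_le_Suc0_iff_eq)
    define d where "d = Max (gdist V E r ` V)"
    have "d \<in> gdist V E r ` V"
      using f r unfolding d_def by (intro Max_in) auto
    then obtain w where w: "w \<in> V" "gdist V E r w = d"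
      by blast
    have farthest: "gdist V E r y \<le> gdist V E r w" if "y \<in> V" for y
      using f that unfolding w(2) d_def by simp
    have "0 < gdist V E r x"
      using gdist_eq_0[OF c r x(1)] x(2) by fastforce
    then have "r \<noteq> w"
      using farthest[OF x(1)] gdist_self[OF r, of E] by auto
    then have c': "connected_graph (V - {w}) E"
      using connected_graph_Diff_farthest[OF c r] farthest by blast
    have card': "card (V - {w}) = card V - 1"
      using f w(1) by simp
    let ?W = "(\<lambda>v. {w, v}) ` {v \<in> V. i < gdist V E w v}"
    have "card (dist_pairs V E {i<..}) \<le> card (dist_pairs (V - {w}) E {i<..} \<union> ?W)"
      using f dist_pairs_far_subset_Diff[OF c c'] by (intro card_mono) (auto intro: finite_dist_pairs)
    also have "\<dots> \<le> card (dist_pairs (V - {w}) E {i<..}) + card ?W"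
      by (rule card_Un_le)
    also have "\<dots> \<le> (card V - Suc i choose 2) + (card V - Suc i)"
    proof (rule add_mono)
      show "card (dist_pairs (V - {w}) E {i<..}) \<le> card V - Suc i choose 2"
        using less.hyps[of "V - {w}"] f c' card' False by simp
      show "card ?W \<le> card V - Suc i"
        using card_image_le[of "{v \<in> V. i < gdist V E w v}" "\<lambda>v. {w, v}"]
          card_far_from_le[OF c f w(1), of i] f by simp
    qed
    also have "\<dots> \<le> card V - i choose 2"
    proof (cases "i < card V")
      case True
      then have "card V - i = Suc (card V - Suc i)"
        by simp
      then show ?thesis
        by (simp add: choose_two_Suc)
    qed simp
    finally show ?thesis .
  qed
qed

lemma sum_diff_add_choose_two: "i \<le> n \<Longrightarrow> (\<Sum>j=1..i. n - j) + (n - i choose 2) = n choose 2"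
proof (induction i)
  case (Suc i)
  then have "n - i = Suc (n - Suc i)"
    by simp
  then show ?case
    using Suc by (simp add: choose_two_Suc)
qed simp

theorem mainTheorem1:
  fixes V :: "'a set" and E :: "'a set set" and N :: nat
  assumes "simple_graph V E" and "connected_graph V E"
    and "N = card V" and "N \<ge> 2"
  shows "ext_majorizes N (\<lambda>j. if j = 1 then real (N * (N - 1)) / 2 else 0)
                         (\<lambda>j. real (alpha V E j))
       \<and> ext_majorizes N (\<lambda>j. real (alpha V E j)) (\<lambda>j. real (N - j))"
proof -
  have f: "finite V"
    using assms(1) by (simp add: simple_graph_def)
  have alpha_sum: "(\<Sum>j=1..i. alpha V E j) + card (dist_pairs V E {i<..}) = N choose 2" for i
    using sum_alpha_add_card_far_pairs[OF assms(2) f] assms(3) by simp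
  have far_le: "card (dist_pairs V E {i<..}) \<le> N - i choose 2" for i
    using card_far_dist_pairs_le[OF f assms(2)] assms(3) by simp
  have alpha_total: "(\<Sum>j=1..N-1. alpha V E j) = N choose 2"
    using alpha_sum[of "N - 1"] far_le[of "N - 1"] assms(4) by (simp add: numeral_2_eq_2)
  have chain_total: "(\<Sum>j=1..N-1. N - j) = N choose 2"
    using sum_diff_add_choose_two[of "N - 1" N] assms(4) by (simp add: numeral_2_eq_2)
  have alpha_le: "(\<Sum>j=1..i. alpha V E j) \<le> N choose 2" for i
    using alpha_sum[of i] by linarith
  have chain_le: "(\<Sum>j=1..i. N - j) \<le> (\<Sum>j=1..i. alpha V E j)" if "i \<le> N" for i
    using alpha_sum[of i] far_le[of i] sum_diff_add_choose_two[OF that] by linarith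
  have "2 dvd N * (N - 1)"
    by auto
  then have top: "real (N * (N - 1)) / 2 = real (N choose 2)"
    unfolding choose_two by (simp only: real_of_nat_div of_nat_numeral)
  have top_sum: "(\<Sum>j=1..i. if j = 1 then real (N * (N - 1)) / 2 else 0) = real (N choose 2)"
    if "1 \<le> i" for i :: nat
    using that unfolding top by simp
  show ?thesis
    unfolding ext_majorizes_def of_nat_sum[symmetric] of_nat_le_iff of_nat_eq_iff
    using top_sum alpha_le chain_le alpha_total chain_total assms(4) by (auto simp del: of_nat_sum)
qed

end
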